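(* Let $\hat T^{\downarrow}_k$ be a random ranked plane tree with $k$ leaves produced by a Markov splitting model, let $\hat T_k$ be its underlying plane tree and $T_k$ its underlying (non-plane, unranked) tree. Suppose the model is split-exchangeable (i.e. $\Pr\{\hat T^{\downarrow}_k=\hat t^{\downarrow}_k\}$ is the same for all ranked plane trees with the same underlying plane tree) and plane-invariant (i.e. $\Pr\{\hat T_k=\hat t_k\}$ is the same for all plane trees with the same underlying tree). Then for every tree $t_k$ with $k$ leaves, \[ \Pr\{T_k=t_k\}=B(t_k)\times 2^{k-1-s(t_k)}\times\Pr\{\hat T^{\downarrow}_k=\hat t^{\downarrow}_k\}, \] where $\hat t^{\downarrow}_k$ is any ranked plane tree whose underlying tree is $t_k$, $B(t_k)=(k-1)!/\prod_{u\in\breve V(t_k)}\lfloor t_k(u)\rfloor$ ($\breve V(t_k)$ the internal nodes, $\lfloor t_k(u)\rfloor$ the number of internal nodes of the subtree rooted at $u$), and $s(t_k)$ is the number of internal nodes of $t_k$ whose two child subtrees are isomorphic.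
   Context: All trees are finite, rooted, binary. A plane tree has the two children of each internal node ordered left/right; forgetting this order gives a (non-plane) tree, up to rooted isomorphism. An internal ranking labels the $k-1$ internal nodes bijectively by $\{1,\dots,k-1\}$ with root rank $1$ and ranks increasing along paths away from the root; a ranked plane tree is a plane tree with an internal ranking. A splitting process starts from a single root leaf and, at step $i=1,\dots,k-1$, chooses one current leaf at random, gives it rank $i$ and attaches a new left leaf and a new right leaf; the result is a random ranked plane tree with $k$ leaves. Equivalently, encoding plane trees by dyadic partitions of $[0,1]$ obtained by recursive midpoint bisection, the process is a sequence of interval bisections. It is a Markov splitting model if the conditional probability of which leaf is split next depends on the history only through the current (unranked) plane tree, i.e. the current partition. *)

theory Defs
  imports Complex_Main
begin

datatype ptree = Leaf | Node ptree ptree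

text \<open>Addresses of nodes: paths from the root, False = left child, True = right child.\<close>
type_synonym addr = "bool list"

fun nleaves :: "ptree \<Rightarrow> nat" where
  "nleaves Leaf = 1"
| "nleaves (Node l r) = nleaves l + nleaves r"

fun leaves :: "ptree \<Rightarrow> addr set" where
  "leaves Leaf = {[]}"
| "leaves (Node l r) = (Cons False) ` leaves l \<union> (Cons True) ` leaves r"

fun internal :: "ptree \<Rightarrow> addr set" where
  "internal Leaf = {}"
| "internal (Node l r) = insert [] ((Cons False) ` internal l \<union> (Cons True) ` internal r)"

fun subtree :: "ptree \<Rightarrow> addr \<Rightarrow> ptree" where
  "subtree t [] = t"
| "subtree (Node l r) (False # a) = subtree l a"
| "subtree (Node l r) (True # a) = subtree r a"
| "subtree Leaf (_ # _) = Leaf"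

fun lchild :: "ptree \<Rightarrow> ptree" where
  "lchild Leaf = Leaf" | "lchild (Node l r) = l"
fun rchild :: "ptree \<Rightarrow> ptree" where
  "rchild Leaf = Leaf" | "rchild (Node l r) = r"

text \<open>Rooted isomorphism: forgetting the left/right order. A (non-plane) tree is
  represented by any plane tree; two plane trees have the same underlying tree iff iso.\<close>
fun iso :: "ptree \<Rightarrow> ptree \<Rightarrow> bool" where
  "iso Leaf Leaf = True"
| "iso (Node a b) (Node c d) = ((iso a c \<and> iso b d) \<or> (iso a d \<and> iso b c))"
| "iso _ _ = False"

text \<open>An internal ranking of t: bijection of internal nodes onto {1..k-1}, root rank 1,
  ranks increasing away from the root; value 0 outside internal nodes (canonical form).\<close>
definition is_ranking :: "ptree \<Rightarrow> (addr \<Rightarrow> nat) \<Rightarrow> bool" where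
  "is_ranking t r \<longleftrightarrow>
     bij_betw r (internal t) {1 .. nleaves t - 1}
   \<and> (t \<noteq> Leaf \<longrightarrow> r [] = 1)
   \<and> (\<forall>a b. a \<in> internal t \<longrightarrow> a @ [b] \<in> internal t \<longrightarrow> r a < r (a @ [b]))
   \<and> (\<forall>a. a \<notin> internal t \<longrightarrow> r a = 0)"

fun split_at :: "ptree \<Rightarrow> addr \<Rightarrow> ptree" where
  "split_at Leaf [] = Node Leaf Leaf"
| "split_at (Node l r) (False # a) = Node (split_at l a) r"
| "split_at (Node l r) (True # a) = Node l (split_at r a)"
| "split_at t _ = t"

definition grow :: "addr list \<Rightarrow> ptree" where
  "grow xs = foldl split_at Leaf xs"

definition valid_seq :: "addr list \<Rightarrow> bool" where
  "valid_seq xs \<longleftrightarrow> (\<forall>i < length xs. xs ! i \<in> leaves (grow (take i xs)))"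

definition rank_of :: "addr list \<Rightarrow> addr \<Rightarrow> nat" where
  "rank_of xs a = (if a \<in> set xs then Suc (hd [i. i \<leftarrow> [0..<length xs], xs ! i = a]) else 0)"

text \<open>A Markov splitting model: for each current plane tree t a probability
  distribution q t on its leaves (which leaf is split next).\<close>
definition markov_model :: "(ptree \<Rightarrow> addr \<Rightarrow> real) \<Rightarrow> bool" where
  "markov_model q \<longleftrightarrow> (\<forall>t. (\<forall>a \<in> leaves t. q t a \<ge> 0) \<and> (\<Sum>a \<in> leaves t. q t a) = 1)"

definition seq_prob :: "(ptree \<Rightarrow> addr \<Rightarrow> real) \<Rightarrow> addr list \<Rightarrow> real" where
  "seq_prob q xs = (\<Prod>i < length xs. q (grow (take i xs)) (xs ! i))"

definition histories :: "nat \<Rightarrow> addr list set" where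
  "histories k = {xs. valid_seq xs \<and> length xs = k - 1}"

definition P_ranked :: "(ptree \<Rightarrow> addr \<Rightarrow> real) \<Rightarrow> nat \<Rightarrow> ptree \<Rightarrow> (addr \<Rightarrow> nat) \<Rightarrow> real" where
  "P_ranked q k t r = (\<Sum>xs \<in> {xs \<in> histories k. grow xs = t \<and> rank_of xs = r}. seq_prob q xs)"

definition P_plane :: "(ptree \<Rightarrow> addr \<Rightarrow> real) \<Rightarrow> nat \<Rightarrow> ptree \<Rightarrow> real" where
  "P_plane q k t = (\<Sum>xs \<in> {xs \<in> histories k. grow xs = t}. seq_prob q xs)"

definition P_tree :: "(ptree \<Rightarrow> addr \<Rightarrow> real) \<Rightarrow> nat \<Rightarrow> ptree \<Rightarrow> real" where
  "P_tree q k t = (\<Sum>xs \<in> {xs \<in> histories k. iso (grow xs) t}. seq_prob q xs)"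

definition split_exchangeable :: "(ptree \<Rightarrow> addr \<Rightarrow> real) \<Rightarrow> nat \<Rightarrow> bool" where
  "split_exchangeable q k \<longleftrightarrow>
     (\<forall>t r1 r2. nleaves t = k \<longrightarrow> is_ranking t r1 \<longrightarrow> is_ranking t r2 \<longrightarrow>
        P_ranked q k t r1 = P_ranked q k t r2)"

definition plane_invariant :: "(ptree \<Rightarrow> addr \<Rightarrow> real) \<Rightarrow> nat \<Rightarrow> bool" where
  "plane_invariant q k \<longleftrightarrow>
     (\<forall>t1 t2. nleaves t1 = k \<longrightarrow> nleaves t2 = k \<longrightarrow> iso t1 t2 \<longrightarrow>
        P_plane q k t1 = P_plane q k t2)"

definition Bcoef :: "ptree \<Rightarrow> real" where
  "Bcoef t = fact (nleaves t - 1) / (\<Prod>u \<in> internal t. real (card (internal (subtree t u))))"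

definition s_sym :: "ptree \<Rightarrow> nat" where
  "s_sym t = card {u \<in> internal t. iso (lchild (subtree t u)) (rchild (subtree t u))}"

end

theory Submission
  imports Defs
begin

text \<open>
  A ranked plane tree is the same thing as a splitting history, so by split-exchangeability
  every history producing a given plane tree \<open>t\<close> has the same probability, and
  \<open>Pr{plane tree = t}\<close> is that common value times the number of histories. These are
  the linear extensions of the ancestor order on the internal nodes, counted by the
  hook-length formula for trees: \<open>(k-1)! / \<Prod>\<^sub>u \<lfloor>t(u)\<rfloor> = B(t)\<close>. By plane-invariance,
  \<open>Pr{tree = t}\<close> is in turn the probability of one plane representative times the number
  of plane trees isomorphic to \<open>t\<close>, which is \<open>2^(k-1-s(t))\<close> since exactly the internal
  nodes with non-isomorphic children give two distinct plane choices.
\<close>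

lemma finite_internal [simp]: "finite (internal t)"
  by (induction t) auto

lemma card_internal_Node:
  "card (internal (Node l r)) = Suc (card (internal l) + card (internal r))"
proof -
  have "card (Cons False ` internal l \<union> Cons True ` internal r) = card (internal l) + card (internal r)"
    by (subst card_Un_disjoint) (auto simp: card_image)
  then show ?thesis by (simp add: card_insert_if) auto
qed

lemma nleaves_eq_Suc_card_internal: "nleaves t = Suc (card (internal t))"
  by (induction t) (simp_all only: nleaves.simps card_internal_Node, simp_all)

lemma leaf_notin_internal: "a \<in> leaves t \<Longrightarrow> a \<notin> internal t"
  by (induction t arbitrary: a) auto

lemma internal_split_at: "a \<in> leaves t \<Longrightarrow> internal (split_at t a) = insert a (internal t)"
  by (induction t arbitrary: a) auto

lemma internal_inject: "internal s = internal t \<Longrightarrow> s = t"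
proof (induction s arbitrary: t)
  case Leaf
  then show ?case by (cases t) auto
next
  case (Node l r)
  then obtain c d where t: "t = Node c d" by (cases t) auto
  have "{a. b # a \<in> internal (Node l r)} = {a. b # a \<in> internal (Node c d)}" for b
    using Node.prems t by simp
  from this[of False] this[of True] have "internal l = internal c" and "internal r = internal d"
    by (simp_all add: image_iff)
  then have "l = c" and "r = d" using Node.IH by blast+
  with t show ?case by simp
qed

lemma internal_prefix_closed: "a @ v \<in> internal t \<Longrightarrow> a \<in> internal t"
proof (induction t arbitrary: a)
  case (Node l r)
  then show ?case by (cases a) auto
qed simp

lemma leaves_prefix_free: "a \<in> leaves t \<Longrightarrow> a @ v \<in> leaves t \<Longrightarrow> v = []"
proof (induction t arbitrary: a)
  case (Node l r)
  then show ?case by (cases a) auto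
qed simp

lemma parent_of_leaf_internal: "a @ [b] \<in> leaves t \<Longrightarrow> a \<in> internal t"
proof (induction t arbitrary: a)
  case (Node l r)
  then show ?case by (cases a) auto
qed simp

lemma below_leaf_if_not_internal: "u \<notin> internal t \<Longrightarrow> \<exists>a \<in> leaves t. \<exists>v. u = a @ v"
proof (induction t arbitrary: u)
  case Leaf
  then show ?case by simp
next
  case (Node l r)
  then obtain b u' where u: "u = b # u'" by (cases u) auto
  show ?case
  proof (cases b)
    case True
    with Node.prems u have "u' \<notin> internal r" by auto
    with Node.IH(2) obtain a v where "a \<in> leaves r" "u' = a @ v" by blast
    with u True show ?thesis by (intro bexI[of _ "True # a"]) auto
  next
    case False
    with Node.prems u have "u' \<notin> internal l" by auto
    with Node.IH(1) obtain a v where "a \<in> leaves l" "u' = a @ v" by blast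
    with u False show ?thesis by (intro bexI[of _ "False # a"]) auto
  qed
qed

lemma internal_subtree: "internal (subtree t u) = {v. u @ v \<in> internal t}"
  by (induction t u rule: subtree.induct) auto

section \<open>Splitting sequences and the hook-length formula\<close>

fun valid_from :: "ptree \<Rightarrow> addr list \<Rightarrow> bool" where
  "valid_from s [] = True"
| "valid_from s (a # xs) = (a \<in> leaves s \<and> valid_from (split_at s a) xs)"

lemma valid_from_iff_nth:
  "valid_from s xs \<longleftrightarrow> (\<forall>i < length xs. xs ! i \<in> leaves (foldl split_at s (take i xs)))"
proof (induction xs arbitrary: s)
  case (Cons a xs)
  then show ?case by (simp only: length_Cons All_less_Suc2) simp
qed simp

lemma valid_seq_iff_valid_from: "valid_seq xs \<longleftrightarrow> valid_from Leaf xs"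
  unfolding valid_seq_def grow_def by (simp add: valid_from_iff_nth)

lemma valid_from_append:
  "valid_from s (xs @ ys) \<longleftrightarrow> valid_from s xs \<and> valid_from (foldl split_at s xs) ys"
  by (induction xs arbitrary: s) auto

lemma valid_from_internal:
  "valid_from s xs \<Longrightarrow>
     internal (foldl split_at s xs) = internal s \<union> set xs \<and> distinct xs \<and> set xs \<inter> internal s = {}"
proof (induction xs arbitrary: s)
  case (Cons a xs)
  then have a: "a \<in> leaves s" and "valid_from (split_at s a) xs" by auto
  with Cons.IH internal_split_at[OF a] leaf_notin_internal[OF a] show ?case by auto
qed simp

definition split_seqs :: "ptree \<Rightarrow> ptree \<Rightarrow> addr list set" where
  "split_seqs s t = {xs. valid_from s xs \<and> foldl split_at s xs = t}"

lemma finite_split_seqs: "finite (split_seqs s t)"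
proof (rule finite_subset)
  show "split_seqs s t \<subseteq> {xs. set xs \<subseteq> internal t \<and> length xs \<le> card (internal t)}"
  proof
    fix xs assume "xs \<in> split_seqs s t"
    then have "valid_from s xs" and t: "foldl split_at s xs = t" by (auto simp: split_seqs_def)
    then have "set xs \<subseteq> internal t" and "distinct xs"
      using valid_from_internal by auto
    then show "xs \<in> {xs. set xs \<subseteq> internal t \<and> length xs \<le> card (internal t)}"
      by (auto simp: card_mono simp flip: distinct_card)
  qed
qed (simp add: finite_lists_length_le)

lemma split_seqs_self: "split_seqs s s = {[]}"
proof -
  have "xs = []" if "valid_from s xs" "foldl split_at s xs = s" for xs
    using valid_from_internal[OF that(1)] that(2) by (metis Int_absorb2 Un_upper2 set_empty2)
  then show ?thesis by (auto simp: split_seqs_def)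
qed

lemma split_seqs_first_split:
  assumes "s \<noteq> t"
  shows "split_seqs s t = (\<Union>a \<in> leaves s \<inter> internal t. Cons a ` split_seqs (split_at s a) t)"
proof
  show "split_seqs s t \<subseteq> (\<Union>a \<in> leaves s \<inter> internal t. Cons a ` split_seqs (split_at s a) t)"
  proof
    fix xs assume "xs \<in> split_seqs s t"
    then have v: "valid_from s xs" and t: "foldl split_at s xs = t" by (auto simp: split_seqs_def)
    with assms obtain a ys where xs: "xs = a # ys" by (cases xs) auto
    have "a \<in> internal t" using valid_from_internal[OF v] t xs by auto
    with v t xs show "xs \<in> (\<Union>a \<in> leaves s \<inter> internal t. Cons a ` split_seqs (split_at s a) t)"
      by (auto simp: split_seqs_def)
  qed
qed (auto simp: split_seqs_def)

definition hook :: "ptree \<Rightarrow> addr \<Rightarrow> nat" where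
  "hook t u = card (internal (subtree t u))"

definition hook_prod :: "ptree \<Rightarrow> nat" where
  "hook_prod t = (\<Prod>u \<in> internal t. hook t u)"

lemma hook_eq_card_descendants: "hook t a = card {u \<in> internal t. \<exists>v. u = a @ v}"
proof -
  have "{u \<in> internal t. \<exists>v. u = a @ v} = (append a) ` {v. a @ v \<in> internal t}" by auto
  then show ?thesis by (simp add: hook_def internal_subtree card_image inj_on_def)
qed

lemma hook_pos: "u \<in> internal t \<Longrightarrow> hook t u > 0"
proof -
  assume "u \<in> internal t"
  then have "[] \<in> internal (subtree t u)" by (simp add: internal_subtree)
  then show ?thesis by (auto simp: hook_def card_gt_0_iff)
qed

text \<open>Every node internal in \<open>t\<close> but not yet in \<open>s\<close> lies below exactly one current leaf of \<open>s\<close>.\<close>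

lemma sum_hook_leaves:
  assumes "internal s \<subseteq> internal t"
  shows "(\<Sum>a \<in> leaves s \<inter> internal t. hook t a) = card (internal t - internal s)"
proof -
  let ?below = "\<lambda>a. {u \<in> internal t. \<exists>v. u = a @ v}"
  have partition: "(\<Union>a \<in> leaves s \<inter> internal t. ?below a) = internal t - internal s"
  proof (intro equalityI subsetI)
    fix u assume "u \<in> (\<Union>a \<in> leaves s \<inter> internal t. ?below a)"
    then obtain a v where "a \<in> leaves s" "u \<in> internal t" "u = a @ v" by blast
    with internal_prefix_closed[of a v s] leaf_notin_internal
    show "u \<in> internal t - internal s" by blast
  next
    fix u assume u: "u \<in> internal t - internal s"
    then obtain a v where "a \<in> leaves s" "u = a @ v"
      using below_leaf_if_not_internal by blast
    with u internal_prefix_closed[of a v t]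
    show "u \<in> (\<Union>a \<in> leaves s \<inter> internal t. ?below a)" by blast
  qed
  have disjoint: "?below a \<inter> ?below b = {}"
    if "a \<in> leaves s" "b \<in> leaves s" "a \<noteq> b" for a b
  proof (rule ccontr)
    assume "?below a \<inter> ?below b \<noteq> {}"
    then obtain v w where "a @ v = b @ w" by blast
    then obtain z where "a = b @ z \<or> b = a @ z" by (metis append_eq_append_conv2)
    with that leaves_prefix_free show False by auto
  qed
  have "(\<Sum>a \<in> leaves s \<inter> internal t. hook t a) = (\<Sum>a \<in> leaves s \<inter> internal t. card (?below a))"
    by (simp add: hook_eq_card_descendants)
  also have "\<dots> = card (\<Union>a \<in> leaves s \<inter> internal t. ?below a)"
    by (rule card_UN_disjoint[symmetric]) (use disjoint in auto)
  finally show ?thesis using partition by simp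
qed

lemma card_split_seqs_first_split:
  assumes "s \<noteq> t"
  shows "card (split_seqs s t) = (\<Sum>a \<in> leaves s \<inter> internal t. card (split_seqs (split_at s a) t))"
  unfolding split_seqs_first_split[OF assms]
  by (subst card_UN_disjoint) (auto simp: finite_split_seqs card_image)

lemma card_split_seqs_mult_hooks:
  assumes "internal s \<subseteq> internal t"
  shows "card (split_seqs s t) * (\<Prod>u \<in> internal t - internal s. hook t u)
           = fact (card (internal t - internal s))"
  using assms
proof (induction "card (internal t - internal s)" arbitrary: s rule: less_induct)
  case less
  let ?D = "internal t - internal s"
  show ?case
  proof (cases "s = t")
    case True
    then show ?thesis by (simp add: split_seqs_self)
  next
    case False
    then have "?D \<noteq> {}" using less.prems internal_inject by blast
    then have D_pos: "card ?D > 0" by (simp add: card_gt_0_iff)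
    have after_split: "card (split_seqs (split_at s a) t) * (\<Prod>u \<in> ?D. hook t u)
                          = hook t a * fact (card ?D - 1)"
      if a: "a \<in> leaves s \<inter> internal t" for a
    proof -
      have split: "internal (split_at s a) = insert a (internal s)"
        using a internal_split_at by auto
      have aD: "a \<in> ?D" using a leaf_notin_internal by auto
      have D: "internal t - internal (split_at s a) = ?D - {a}"
        using split by auto
      have "card (?D - {a}) < card ?D" using aD by (intro card_Diff1_less) auto
      moreover have "internal (split_at s a) \<subseteq> internal t" using split a less.prems by auto
      ultimately have "card (split_seqs (split_at s a) t) * (\<Prod>u \<in> ?D - {a}. hook t u)
                         = fact (card (?D - {a}))"
        using less.hyps[of "split_at s a"] unfolding D by blast
      moreover have "(\<Prod>u \<in> ?D. hook t u) = hook t a * (\<Prod>u \<in> ?D - {a}. hook t u)"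
        using aD by (simp add: prod.remove)
      ultimately show ?thesis using aD by (simp add: card_Diff_singleton mult.left_commute)
    qed
    have "card (split_seqs s t) * (\<Prod>u \<in> ?D. hook t u)
            = (\<Sum>a \<in> leaves s \<inter> internal t. card (split_seqs (split_at s a) t) * (\<Prod>u \<in> ?D. hook t u))"
      by (simp add: card_split_seqs_first_split[OF False] sum_distrib_right)
    also have "\<dots> = (\<Sum>a \<in> leaves s \<inter> internal t. hook t a * fact (card ?D - 1))"
      by (rule sum.cong[OF refl after_split])
    also have "\<dots> = card ?D * fact (card ?D - 1)"
      using sum_hook_leaves[OF less.prems] by (simp flip: sum_distrib_right)
    also have "\<dots> = fact (card ?D)"
      using D_pos by (metis fact_reduce of_nat_id)
    finally show ?thesis .
  qed
qed

lemma Bcoef_eq_fact_div_hook_prod: "Bcoef t = fact (card (internal t)) / hook_prod t"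
  by (simp add: Bcoef_def hook_prod_def hook_def nleaves_eq_Suc_card_internal)

lemma card_split_seqs_Leaf: "card (split_seqs Leaf t) = Bcoef t"
proof -
  have "card (split_seqs Leaf t) * hook_prod t = fact (card (internal t))"
    using card_split_seqs_mult_hooks[of Leaf t] by (simp add: hook_prod_def)
  then have "real (card (split_seqs Leaf t)) * hook_prod t = fact (card (internal t))"
    by (metis of_nat_fact of_nat_mult)
  moreover have "hook_prod t > 0"
    by (simp add: hook_prod_def hook_pos prod_pos)
  ultimately show ?thesis
    by (simp add: Bcoef_eq_fact_div_hook_prod field_simps)
qed

section \<open>Isomorphism classes\<close>

lemma iso_sym: "iso a b \<Longrightarrow> iso b a"
  by (induction a b rule: iso.induct) auto

lemma iso_trans: "iso a b \<Longrightarrow> iso b c \<Longrightarrow> iso a c"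
proof (induction a arbitrary: b c)
  case Leaf
  then show ?case by (cases b; cases c) auto
next
  case (Node a1 a2)
  then obtain b1 b2 c1 c2 where "b = Node b1 b2" "c = Node c1 c2"
    by (cases b; cases c) auto
  with Node show ?case by simp metis
qed

lemma iso_nleaves: "iso a b \<Longrightarrow> nleaves a = nleaves b"
  by (induction a b rule: iso.induct) auto

lemma iso_card_internal: "iso a b \<Longrightarrow> card (internal a) = card (internal b)"
  using iso_nleaves nleaves_eq_Suc_card_internal by (metis Suc_inject)

lemma hook_prod_Node: "hook_prod (Node l r) = card (internal (Node l r)) * hook_prod l * hook_prod r"
proof -
  have "hook_prod (Node l r)
          = hook (Node l r) [] * (\<Prod>u \<in> Cons False ` internal l \<union> Cons True ` internal r. hook (Node l r) u)"
    unfolding hook_prod_def internal.simps by (subst prod.insert) auto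
  also have "(\<Prod>u \<in> Cons False ` internal l \<union> Cons True ` internal r. hook (Node l r) u)
      = (\<Prod>u \<in> Cons False ` internal l. hook (Node l r) u) * (\<Prod>u \<in> Cons True ` internal r. hook (Node l r) u)"
    by (rule prod.union_disjoint) auto
  also have "(\<Prod>u \<in> Cons False ` internal l. hook (Node l r) u) = hook_prod l"
    by (auto simp: hook_prod_def prod.reindex hook_def)
  also have "(\<Prod>u \<in> Cons True ` internal r. hook (Node l r) u) = hook_prod r"
    by (auto simp: hook_prod_def prod.reindex hook_def)
  finally show ?thesis by (simp add: hook_def)
qed

lemma iso_hook_prod: "iso a b \<Longrightarrow> hook_prod a = hook_prod b"
proof (induction a b rule: iso.induct)
  case (2 a b c d)
  then show ?case
    using iso_card_internal[OF "2.prems"] by (auto simp: hook_prod_Node)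
qed auto

lemma iso_Bcoef: "iso a b \<Longrightarrow> Bcoef a = Bcoef b"
  by (simp add: Bcoef_eq_fact_div_hook_prod iso_card_internal iso_hook_prod)

lemma s_sym_Node: "s_sym (Node l r) = (if iso l r then 1 else 0) + s_sym l + s_sym r"
proof -
  let ?sym = "\<lambda>t u. iso (lchild (subtree t u)) (rchild (subtree t u))"
  let ?below = "Cons False ` {u \<in> internal l. ?sym l u} \<union> Cons True ` {u \<in> internal r. ?sym r u}"
  have split: "{u \<in> internal (Node l r). ?sym (Node l r) u} = (if iso l r then {[]} else {}) \<union> ?below"
    by auto
  have "card ?below = s_sym l + s_sym r"
    unfolding s_sym_def by (subst card_Un_disjoint) (auto simp: card_image)
  then show ?thesis
    unfolding s_sym_def[of "Node l r"] split by (subst card_Un_disjoint) auto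
qed

lemma s_sym_le_card_internal: "s_sym t \<le> card (internal t)"
  unfolding s_sym_def by (rule card_mono) auto

lemma iso_class_Node:
  "{u. iso u (Node l r)} = case_prod Node `
     ({u. iso u l} \<times> {u. iso u r} \<union> {u. iso u r} \<times> {u. iso u l})"
proof
  show "{u. iso u (Node l r)} \<subseteq> case_prod Node ` ({u. iso u l} \<times> {u. iso u r} \<union> {u. iso u r} \<times> {u. iso u l})"
  proof
    fix u assume "u \<in> {u. iso u (Node l r)}"
    then obtain a b where "u = Node a b" "(iso a l \<and> iso b r) \<or> (iso a r \<and> iso b l)"
      by (cases u) auto
    then show "u \<in> case_prod Node ` ({u. iso u l} \<times> {u. iso u r} \<union> {u. iso u r} \<times> {u. iso u l})"
      by auto
  qed
qed auto

lemma iso_class_Leaf: "{u. iso u Leaf} = {Leaf}"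
  by (auto elim: iso.elims)

lemma finite_iso_class: "finite {u. iso u t}"
  by (induction t) (simp_all add: iso_class_Leaf iso_class_Node)

lemma card_iso_class: "card {u. iso u t} = 2 ^ (card (internal t) - s_sym t)"
proof (induction t)
  case Leaf
  then show ?case by (simp add: iso_class_Leaf)
next
  case (Node l r)
  let ?L = "{u. iso u l}" and ?R = "{u. iso u r}"
  have inj: "inj_on (case_prod Node) A" for A by (auto simp: inj_on_def)
  have exponent: "card (internal (Node l r)) - s_sym (Node l r)
      = (if iso l r then 0 else 1) + (card (internal l) - s_sym l) + (card (internal r) - s_sym r)"
    using s_sym_le_card_internal[of l] s_sym_le_card_internal[of r]
    by (simp only: card_internal_Node s_sym_Node) simp
  show ?case
  proof (cases "iso l r")
    case True
    then have "?L = ?R" using iso_trans iso_sym by blast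
    then have "card {u. iso u (Node l r)} = card ?L * card ?R"
      by (simp add: iso_class_Node card_image inj card_cartesian_product)
    with True Node.IH show ?thesis
      by (simp only: exponent) (simp add: power_add)
  next
    case False
    then have "?L \<times> ?R \<inter> ?R \<times> ?L = {}" using iso_trans iso_sym by blast
    then have "card {u. iso u (Node l r)} = 2 * (card ?L * card ?R)"
      by (simp add: iso_class_Node card_image inj card_Un_disjoint finite_iso_class
          card_cartesian_product)
    with False Node.IH show ?thesis
      by (simp only: exponent) (simp add: power_add)
  qed
qed

section \<open>Histories and rankings\<close>

lemma rank_of_nth:
  assumes "distinct xs" "i < length xs"
  shows "rank_of xs (xs ! i) = Suc i"
proof -
  have "[j. j \<leftarrow> [0..<n], xs ! j = xs ! i] = [i]" if "i < n" "n \<le> length xs" for n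
    using that assms(1) by (induction n) (auto simp: nth_eq_iff_index_eq)
  with assms show ?thesis by (simp add: rank_of_def)
qed

lemma split_seqs_LeafD:
  assumes "xs \<in> split_seqs Leaf t"
  shows "set xs = internal t" and "distinct xs" and "length xs = card (internal t)"
proof -
  have "valid_from Leaf xs" and "foldl split_at Leaf xs = t"
    using assms by (auto simp: split_seqs_def)
  then show "set xs = internal t" and "distinct xs"
    using valid_from_internal by auto
  then show "length xs = card (internal t)" by (metis distinct_card)
qed

lemma histories_grow_eq_split_seqs:
  assumes "nleaves t = k"
  shows "{xs \<in> histories k. grow xs = t} = split_seqs Leaf t"
proof (intro equalityI subsetI)
  fix xs assume "xs \<in> {xs \<in> histories k. grow xs = t}"
  then show "xs \<in> split_seqs Leaf t"
    by (simp add: histories_def split_seqs_def grow_def valid_seq_iff_valid_from)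
next
  fix xs assume xs: "xs \<in> split_seqs Leaf t"
  then have "length xs = k - 1"
    using assms split_seqs_LeafD(3) by (simp add: nleaves_eq_Suc_card_internal)
  with xs show "xs \<in> {xs \<in> histories k. grow xs = t}"
    by (simp add: histories_def split_seqs_def grow_def valid_seq_iff_valid_from)
qed

lemma inj_on_rank_of: "inj_on rank_of (split_seqs Leaf t)"
proof
  fix xs ys assume xs: "xs \<in> split_seqs Leaf t" and ys: "ys \<in> split_seqs Leaf t"
    and rank: "rank_of xs = rank_of ys"
  note X = split_seqs_LeafD[OF xs] and Y = split_seqs_LeafD[OF ys]
  show "xs = ys"
  proof (rule nth_equalityI)
    show "length xs = length ys" using X Y by simp
    fix i assume i: "i < length xs"
    have "rank_of ys (xs ! i) = Suc i" using rank_of_nth[OF X(2) i] rank by simp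
    then have "xs ! i \<in> set ys" by (auto simp: rank_of_def split: if_splits)
    then obtain j where j: "j < length ys" "xs ! i = ys ! j" by (auto simp: in_set_conv_nth)
    with rank_of_nth[OF Y(2)] \<open>rank_of ys (xs ! i) = Suc i\<close> show "xs ! i = ys ! i" by simp
  qed
qed

lemma rank_of_parent_less:
  assumes "valid_from Leaf xs" "distinct xs" "a @ [b] \<in> set xs"
  shows "rank_of xs a < rank_of xs (a @ [b])"
proof -
  obtain j where j: "j < length xs" "a @ [b] = xs ! j"
    using assms(3) by (metis in_set_conv_nth)
  have "valid_from Leaf (take j xs @ xs ! j # drop (Suc j) xs)"
    using assms(1) id_take_nth_drop[OF j(1)] by simp
  then have "valid_from Leaf (take j xs)" and "a @ [b] \<in> leaves (foldl split_at Leaf (take j xs))"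
    using j(2) by (auto simp: valid_from_append)
  then have "a \<in> set (take j xs)"
    using valid_from_internal[of Leaf "take j xs"] parent_of_leaf_internal by auto
  then obtain i where "i < j" "a = xs ! i" using j(1) by (auto simp: in_set_conv_nth)
  with j show ?thesis using rank_of_nth[OF assms(2)] by simp
qed

lemma is_ranking_rank_of:
  assumes xs: "xs \<in> split_seqs Leaf t"
  shows "is_ranking t (rank_of xs)"
proof -
  note X = split_seqs_LeafD[OF xs]
  have valid: "valid_from Leaf xs" and t: "t = foldl split_at Leaf xs"
    using xs by (auto simp: split_seqs_def)
  have ranks: "rank_of xs ` set xs = {1..length xs}"
  proof -
    have "rank_of xs ` set xs = (\<lambda>i. rank_of xs (xs ! i)) ` {..<length xs}"
      by (auto simp: set_conv_nth)
    also have "\<dots> = {1..length xs}"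
      using rank_of_nth[OF X(2)] by (simp add: image_Suc_lessThan)
    finally show ?thesis .
  qed
  have "inj_on (rank_of xs) (set xs)"
    by (rule inj_onI) (metis X(2) in_set_conv_nth nat.inject rank_of_nth)
  then have bij: "bij_betw (rank_of xs) (internal t) {1 .. nleaves t - 1}"
    using ranks X by (simp add: bij_betw_def nleaves_eq_Suc_card_internal)
  have root: "rank_of xs [] = 1" if "t \<noteq> Leaf"
  proof -
    from that t obtain a ys where "xs = a # ys" by (cases xs) auto
    with valid have "xs ! 0 = []" by simp
    with rank_of_nth[OF X(2), of 0] \<open>xs = a # ys\<close> show ?thesis by simp
  qed
  have "rank_of xs a = 0" if "a \<notin> internal t" for a
    using that X(1) by (simp add: rank_of_def)
  with bij root rank_of_parent_less[OF valid X(2)] X(1) show ?thesis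
    by (auto simp: is_ranking_def)
qed

lemma P_plane_eq_sum_split_seqs:
  "nleaves t = k \<Longrightarrow> P_plane q k t = (\<Sum>xs \<in> split_seqs Leaf t. seq_prob q xs)"
  by (simp add: P_plane_def histories_grow_eq_split_seqs)

lemma P_ranked_rank_of:
  assumes "nleaves t = k" "xs \<in> split_seqs Leaf t"
  shows "P_ranked q k t (rank_of xs) = seq_prob q xs"
proof -
  have "{ys \<in> histories k. grow ys = t \<and> rank_of ys = rank_of xs}
          = {ys \<in> split_seqs Leaf t. rank_of ys = rank_of xs}"
    using histories_grow_eq_split_seqs[OF assms(1)] by blast
  also have "\<dots> = {xs}"
    using assms(2) inj_on_rank_of[of t] by (auto simp: inj_on_def)
  finally show ?thesis by (simp add: P_ranked_def)
qed

lemma P_plane_eq_Bcoef_mult_P_ranked: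
  assumes "split_exchangeable q k" "nleaves t = k" "is_ranking t r"
  shows "P_plane q k t = Bcoef t * P_ranked q k t r"
proof -
  have "P_plane q k t = (\<Sum>xs \<in> split_seqs Leaf t. P_ranked q k t (rank_of xs))"
    unfolding P_plane_eq_sum_split_seqs[OF assms(2)]
    by (rule sum.cong[OF refl]) (simp add: P_ranked_rank_of assms(2))
  also have "\<dots> = (\<Sum>xs \<in> split_seqs Leaf t. P_ranked q k t r)"
  proof (rule sum.cong[OF refl])
    fix xs assume "xs \<in> split_seqs Leaf t"
    then show "P_ranked q k t (rank_of xs) = P_ranked q k t r"
      using assms is_ranking_rank_of unfolding split_exchangeable_def by blast
  qed
  finally show ?thesis by (simp add: card_split_seqs_Leaf)
qed

lemma P_tree_eq_sum_P_plane:
  assumes "nleaves t = k"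
  shows "P_tree q k t = (\<Sum>u \<in> {u. iso u t}. P_plane q k u)"
proof -
  have nleaves_class: "nleaves u = k" if "u \<in> {u. iso u t}" for u
    using that assms iso_nleaves by simp
  have "{xs \<in> histories k. iso (grow xs) t} = (\<Union>u \<in> {u. iso u t}. {xs \<in> histories k. grow xs = u})"
    by blast
  also have "\<dots> = (\<Union>u \<in> {u. iso u t}. split_seqs Leaf u)"
    using histories_grow_eq_split_seqs[OF nleaves_class] by simp
  finally have "P_tree q k t = (\<Sum>xs \<in> (\<Union>u \<in> {u. iso u t}. split_seqs Leaf u). seq_prob q xs)"
    by (simp add: P_tree_def)
  also have "\<dots> = (\<Sum>u \<in> {u. iso u t}. \<Sum>xs \<in> split_seqs Leaf u. seq_prob q xs)"
    by (rule sum.UNION_disjoint) (simp_all add: finite_iso_class finite_split_seqs, auto simp: split_seqs_def)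
  also have "\<dots> = (\<Sum>u \<in> {u. iso u t}. P_plane q k u)"
    by (rule sum.cong[OF refl]) (simp add: P_plane_eq_sum_split_seqs nleaves_class)
  finally show ?thesis .
qed

theorem theorem4p2:
  fixes q :: "ptree \<Rightarrow> addr \<Rightarrow> real" and k :: nat and t t' :: ptree and r :: "addr \<Rightarrow> nat"
  assumes "markov_model q"
    and "split_exchangeable q k"
    and "plane_invariant q k"
    and "nleaves t = k"
    and "iso t' t"
    and "is_ranking t' r"
  shows "P_tree q k t = Bcoef t * 2 ^ (k - 1 - s_sym t) * P_ranked q k t' r"
proof -
  \<comment> \<open>The identity holds for arbitrary weights \<open>q\<close>.\<close>
  have k': "nleaves t' = k" using assms(4,5) iso_nleaves by simp
  have "P_plane q k u = P_plane q k t'" if "iso u t" for u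
    using assms(3,4) k' that iso_nleaves[OF that] iso_trans[OF that iso_sym[OF assms(5)]]
    unfolding plane_invariant_def by blast
  then have "P_tree q k t = (\<Sum>u \<in> {u. iso u t}. P_plane q k t')"
    unfolding P_tree_eq_sum_P_plane[OF assms(4)] by (intro sum.cong) auto
  also have "\<dots> = card {u. iso u t} * (Bcoef t' * P_ranked q k t' r)"
    using P_plane_eq_Bcoef_mult_P_ranked[OF assms(2) k' assms(6)] by simp
  also have "card {u. iso u t} = 2 ^ (k - 1 - s_sym t)"
    using assms(4) by (simp add: card_iso_class nleaves_eq_Suc_card_internal)
  also have "Bcoef t' = Bcoef t"
    using assms(5) by (rule iso_Bcoef)
  finally show ?thesis by simp
qed

end
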